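(* Let $S:\mathbb{R}^d\to\mathbb{R}$ be real analytic in a neighborhood of the origin, and let $\beta^1,\dots,\beta^k\in\mathbb{N}^d$. There is a constant $C$ such that for all $x$ sufficiently close to the origin with all coordinates nonzero and all $1\le i\le k$, $$|\partial^{\beta^i}S(x)|\le C\sup_{\alpha\in\mathcal{N}(S)}|x^{\alpha-\beta^i}|,$$ where $|x^{\gamma}|=\prod_j|x_j|^{\gamma_j}$.
   Context: $\mathbb{N}=\{0,1,2,\dots\}$, $\partial^\beta=\partial_1^{\beta_1}\cdots\partial_d^{\beta_d}$. Writing $S(x)=\sum_{\alpha}c_\alpha x^\alpha$ near the origin, $\mathcal{N}(S)$ is the convex hull of $\bigcup_{c_\alpha\ne0}(\alpha+[0,\infty)^d)$. *)

theory Defs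
  imports "HOL-Analysis.Analysis"
begin

definition monomial :: "('n::finite \<Rightarrow> nat) \<Rightarrow> real^'n \<Rightarrow> real" where
  "monomial \<alpha> x = (\<Prod>j\<in>UNIV. (x $ j) ^ (\<alpha> j))"

definition partial :: "'n::finite \<Rightarrow> (real^'n \<Rightarrow> real) \<Rightarrow> real^'n \<Rightarrow> real" where
  "partial j f x = deriv (\<lambda>t. f (x + t *\<^sub>R axis j 1)) 0"

text \<open>A fixed enumeration of the coordinates (the order is irrelevant for the
  analytic functions considered, since mixed partials commute).\<close>
definition coord_list :: "'n::finite list" where
  "coord_list = (SOME xs. distinct xs \<and> set xs = UNIV)"

definition mixed_partial :: "('n::finite \<Rightarrow> nat) \<Rightarrow> (real^'n \<Rightarrow> real) \<Rightarrow> real^'n \<Rightarrow> real" where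
  "mixed_partial \<beta> f = foldr (\<lambda>j g. (partial j ^^ \<beta> j) g) coord_list f"

definition newton_polyhedron :: "(('n::finite \<Rightarrow> nat) \<Rightarrow> real) \<Rightarrow> (real^'n) set" where
  "newton_polyhedron c =
     convex hull (\<Union>\<alpha>\<in>{\<alpha>. c \<alpha> \<noteq> 0}. {v. \<forall>j. real (\<alpha> j) \<le> v $ j})"

definition abs_mono :: "real^'n \<Rightarrow> real^'n::finite \<Rightarrow> real" where
  "abs_mono x \<gamma> = (\<Prod>j\<in>UNIV. \<bar>x $ j\<bar> powr (\<gamma> $ j))"

end

theory Submission
  imports Defs
begin

text \<open>On a small polydisc, \<open>S x = \<Sum>\<^sub>\<alpha> c \<alpha> x^\<alpha>\<close> converges absolutely. Differentiating termwise,
  at the price of shrinking the radius by a fixed factor per derivative, shows that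
  \<open>\<partial>^\<beta> S x = \<Sum>\<^sub>\<alpha> a \<alpha> x^(\<alpha> - \<beta>)\<close> converges absolutely as well, with \<open>a \<alpha> \<noteq> 0\<close> only where
  \<open>c \<alpha> \<noteq> 0\<close>. By Dickson's lemma every \<open>\<alpha>\<close> in the support of \<open>c\<close> dominates one of finitely many
  elements \<open>\<mu>\<close> of the support. In \<open>|x^(\<alpha> - \<beta>)| = |x^(\<mu> - \<beta>)| |x^(\<alpha> - \<mu>)|\<close> the first factor is
  bounded by the supremum over the Newton polyhedron, and on the polydisc of radius \<open>\<rho> \<le> 1\<close>
  the second by \<open>\<rho>^(|\<alpha>| - |\<mu>|)\<close>; summing against \<open>|a \<alpha>|\<close> gives the estimate.\<close>

section \<open>Termwise differentiation of countable sums\<close>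

lemma termwise_has_real_derivative_suminf:
  fixes f f' :: "nat \<Rightarrow> real \<Rightarrow> real" and M :: "nat \<Rightarrow> real"
  assumes "R > 0"
    and "\<And>n t. \<bar>t\<bar> < R \<Longrightarrow> (f n has_real_derivative f' n t) (at t)"
    and "\<And>n t. \<bar>t\<bar> < R \<Longrightarrow> \<bar>f' n t\<bar> \<le> M n"
    and "summable M" and "summable (\<lambda>n. f n 0)"
  shows "((\<lambda>t. \<Sum>n. f n t) has_real_derivative (\<Sum>n. f' n 0)) (at 0)"
proof (rule has_field_derivative_series'(2)[where S="ball 0 R" and x0=0])
  show "uniformly_convergent_on (ball 0 R) (\<lambda>n t. \<Sum>i<n. f' i t)"
    by (rule Weierstrass_m_test') (use assms in auto)
qed (use assms in \<open>auto intro: has_field_derivative_at_within\<close>)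

lemma termwise_has_real_derivative_has_sum:
  fixes F F' :: "'a::countable \<Rightarrow> real \<Rightarrow> real" and M :: "'a \<Rightarrow> real"
  assumes "infinite (UNIV :: 'a set)" and "R > 0"
    and deriv: "\<And>a t. \<bar>t\<bar> < R \<Longrightarrow> (F a has_real_derivative F' a t) (at t)"
    and bound: "\<And>a t. \<bar>t\<bar> < R \<Longrightarrow> \<bar>F' a t\<bar> \<le> M a"
    and "M summable_on UNIV"
    and sum: "\<And>t. \<bar>t\<bar> < R \<Longrightarrow> ((\<lambda>a. F a t) has_sum H t) UNIV"
  shows "(\<lambda>a. F' a 0) summable_on UNIV"
    and "(H has_real_derivative (\<Sum>\<^sub>\<infinity>a. F' a 0)) (at 0)"
proof -
  show summable': "(\<lambda>a. F' a 0) summable_on UNIV"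
    by (rule abs_summable_summable, rule summable_on_comparison_test[OF \<open>M summable_on UNIV\<close>])
       (use bound \<open>R > 0\<close> in auto)
  obtain e :: "'a \<Rightarrow> nat" where "bij e"
    using countableE_infinite[OF countableI_type assms(1)] by blast
  then have "bij (inv e)"
    by (rule bij_imp_bij_inv)
  have reindex: "(\<lambda>n. h (inv e n)) sums s" if "(h has_sum s) UNIV" for h :: "'a \<Rightarrow> real" and s
    using has_sum_reindex_bij_betw[OF \<open>bij (inv e)\<close>, THEN iffD2, OF that] by (rule has_sum_imp_sums)
  have sums_H: "(\<lambda>n. F (inv e n) t) sums H t" if "\<bar>t\<bar> < R" for t
    using reindex[OF sum[OF that]] .
  have "summable (\<lambda>n. M (inv e n))"
    using reindex[OF has_sum_infsum[OF \<open>M summable_on UNIV\<close>]] by (rule sums_summable)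
  moreover have "summable (\<lambda>n. F (inv e n) 0)"
    using sums_H[of 0] \<open>R > 0\<close> by (simp add: sums_iff)
  ultimately have "((\<lambda>t. \<Sum>n. F (inv e n) t) has_real_derivative (\<Sum>n. F' (inv e n) 0)) (at 0)"
    by (intro termwise_has_real_derivative_suminf[OF \<open>R > 0\<close>] deriv) (simp_all add: bound)
  moreover have "(\<Sum>n. F' (inv e n) 0) = (\<Sum>\<^sub>\<infinity>a. F' a 0)"
    using reindex[OF has_sum_infsum[OF summable']] by (simp add: sums_iff)
  ultimately have deriv_suminf: "((\<lambda>t. \<Sum>n. F (inv e n) t) has_real_derivative (\<Sum>\<^sub>\<infinity>a. F' a 0)) (at 0)"
    by simp
  have suminf_eq: "(\<Sum>n. F (inv e n) t) = H t" if "\<bar>t\<bar> < R" for t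
    using sums_H[OF that] by (simp add: sums_iff)
  show "(H has_real_derivative (\<Sum>\<^sub>\<infinity>a. F' a 0)) (at 0)"
    by (rule has_field_derivative_transform_within_open[where S="ball 0 R", OF deriv_suminf])
       (simp_all add: \<open>R > 0\<close> suminf_eq)
qed

section \<open>Monomials\<close>

definition multideg :: "('n::finite \<Rightarrow> nat) \<Rightarrow> nat" where
  "multideg \<alpha> = (\<Sum>j\<in>UNIV. \<alpha> j)"

lemma monomial_const: "monomial \<alpha> (\<chi> k. a) = a ^ multideg \<alpha>"
  unfolding monomial_def multideg_def by (simp add: power_sum)

lemma abs_monomial_le_power_multideg:
  assumes "\<And>k. \<bar>x $ k\<bar> \<le> r"
  shows "\<bar>monomial \<alpha> x\<bar> \<le> r ^ multideg \<alpha>"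
proof -
  have "\<bar>monomial \<alpha> x\<bar> = (\<Prod>k\<in>UNIV. \<bar>x $ k\<bar> ^ \<alpha> k)"
    unfolding monomial_def by (simp add: abs_prod power_abs)
  also have "\<dots> \<le> (\<Prod>k\<in>UNIV. r ^ \<alpha> k)"
    by (rule prod_mono) (use assms in \<open>auto intro: power_mono\<close>)
  also have "\<dots> = r ^ multideg \<alpha>"
    unfolding multideg_def by (simp add: power_sum)
  finally show ?thesis .
qed

lemma monomial_add_axis:
  "monomial \<alpha> (x + t *\<^sub>R axis j 1) = monomial (\<alpha>(j := 0)) x * (x $ j + t) ^ \<alpha> j"
proof -
  have "monomial \<alpha> (x + t *\<^sub>R axis j 1) = (x $ j + t) ^ \<alpha> j * (\<Prod>k\<in>UNIV - {j}. (x $ k) ^ \<alpha> k)"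
    unfolding monomial_def by (subst prod.remove[of UNIV j]) (auto simp: axis_def intro!: prod.cong)
  moreover have "monomial (\<alpha>(j := 0)) x = (\<Prod>k\<in>UNIV - {j}. (x $ k) ^ \<alpha> k)"
    unfolding monomial_def by (subst prod.remove[of UNIV j]) (auto intro!: prod.cong)
  ultimately show ?thesis by simp
qed

lemma multideg_decrement:
  assumes "\<alpha> j \<ge> 1"
  shows "multideg (\<alpha>(j := \<alpha> j - 1)) + 1 = multideg \<alpha>"
proof -
  have "multideg \<alpha> = \<alpha> j + sum \<alpha> (UNIV - {j})"
    unfolding multideg_def by (subst sum.remove[of UNIV j]) auto
  moreover have "multideg (\<alpha>(j := \<alpha> j - 1)) = (\<alpha> j - 1) + sum \<alpha> (UNIV - {j})"
    unfolding multideg_def by (subst sum.remove[of UNIV j]) (auto intro!: sum.cong)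
  ultimately show ?thesis using assms by simp
qed

text \<open>The factor \<open>\<alpha> j\<close> produced by differentiating \<open>x^\<alpha>\<close> is absorbed by halving the radius.\<close>

lemma partial_coefficient_le:
  assumes "0 < \<rho>" "0 \<le> r" "r \<le> \<rho> / 2"
  shows "real (\<alpha> j) * r ^ multideg (\<alpha>(j := \<alpha> j - 1)) \<le> \<rho> ^ multideg \<alpha> / \<rho>"
proof (cases "\<alpha> j = 0")
  case True
  then show ?thesis using assms by simp
next
  case False
  define D where "D = multideg (\<alpha>(j := \<alpha> j - 1))"
  have D: "D + 1 = multideg \<alpha>"
    unfolding D_def using False by (intro multideg_decrement) auto
  have "\<alpha> j \<le> multideg \<alpha>"
    unfolding multideg_def by (rule member_le_sum) auto
  also have "\<dots> \<le> 2 ^ D"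
    using D less_exp[of D] by linarith
  finally have "real (\<alpha> j) * r ^ D \<le> 2 ^ D * (\<rho> / 2) ^ D"
    using assms by (intro mult_mono power_mono) (auto simp flip: of_nat_le_iff)
  also have "\<dots> = \<rho> ^ multideg \<alpha> / \<rho>"
    using D[symmetric] assms(1) by (simp add: power_divide)
  finally show ?thesis unfolding D_def .
qed

section \<open>Monomial expansions and their partial derivatives\<close>

text \<open>The terms of an expansion stay indexed by the multi-indices of the original series;
  \<open>e \<alpha>\<close> is the exponent that the term of index \<open>\<alpha>\<close> carries after differentiation.\<close>

definition has_monomial_expansion ::
    "(real^'n::finite \<Rightarrow> real) \<Rightarrow> (('n \<Rightarrow> nat) \<Rightarrow> real) \<Rightarrow> (('n \<Rightarrow> nat) \<Rightarrow> 'n \<Rightarrow> nat) \<Rightarrow> real \<Rightarrow> bool"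
  where
  "has_monomial_expansion g a e \<rho> \<longleftrightarrow> 0 < \<rho> \<and> \<rho> \<le> 1 \<and>
     (\<lambda>\<alpha>. \<bar>a \<alpha>\<bar> * \<rho> ^ multideg (e \<alpha>)) summable_on UNIV \<and>
     (\<forall>x. (\<forall>k. \<bar>x $ k\<bar> < \<rho>) \<longrightarrow> ((\<lambda>\<alpha>. a \<alpha> * monomial (e \<alpha>) x) has_sum g x) UNIV)"

lemma infinite_UNIV_multi_index: "infinite (UNIV :: ('n \<Rightarrow> nat) set)"
  using finite_fun_UNIVD2 infinite_UNIV_nat by blast

lemma has_sum_partial_termwise:
  assumes "has_monomial_expansion g a e \<rho>" and x: "\<forall>k. \<bar>x $ k\<bar> < \<rho> / 4"
  shows "((\<lambda>\<alpha>. a \<alpha> * real (e \<alpha> j) * monomial ((e \<alpha>)(j := e \<alpha> j - 1)) x) has_sum partial j g x) UNIV"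
proof -
  from assms have \<rho>: "0 < \<rho>"
    and summable: "(\<lambda>\<alpha>. \<bar>a \<alpha>\<bar> * \<rho> ^ multideg (e \<alpha>)) summable_on UNIV"
    and sum: "\<And>y. \<forall>k. \<bar>y $ k\<bar> < \<rho> \<Longrightarrow> ((\<lambda>\<alpha>. a \<alpha> * monomial (e \<alpha>) y) has_sum g y) UNIV"
    unfolding has_monomial_expansion_def by auto
  define y where "y t = x + t *\<^sub>R axis j 1" for t
  define F where "F \<alpha> t = a \<alpha> * monomial (e \<alpha>) (y t)" for \<alpha> t
  define F' where "F' \<alpha> t = a \<alpha> * real (e \<alpha> j) * monomial ((e \<alpha>)(j := e \<alpha> j - 1)) (y t)" for \<alpha> t
  define M where "M \<alpha> = \<bar>a \<alpha>\<bar> * (\<rho> ^ multideg (e \<alpha>) / \<rho>)" for \<alpha>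
  have y: "\<bar>y t $ k\<bar> \<le> \<rho> / 2" if "\<bar>t\<bar> < \<rho> / 4" for t k
    using x[rule_format, of k] that by (auto simp: y_def axis_def abs_if split: if_splits)
  have deriv: "(F \<alpha> has_real_derivative F' \<alpha> t) (at t)" for \<alpha> t
    unfolding F_def F'_def y_def monomial_add_axis
    by (auto intro!: derivative_eq_intros)
  have bound: "\<bar>F' \<alpha> t\<bar> \<le> M \<alpha>" if "\<bar>t\<bar> < \<rho> / 4" for \<alpha> t
  proof -
    have "\<bar>F' \<alpha> t\<bar> = \<bar>a \<alpha>\<bar> * (real (e \<alpha> j) * \<bar>monomial ((e \<alpha>)(j := e \<alpha> j - 1)) (y t)\<bar>)"
      by (simp add: F'_def abs_mult)
    also have "\<dots> \<le> \<bar>a \<alpha>\<bar> * (real (e \<alpha> j) * (\<rho> / 2) ^ multideg ((e \<alpha>)(j := e \<alpha> j - 1)))"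
      by (intro mult_left_mono abs_monomial_le_power_multideg y that) auto
    also have "\<dots> \<le> M \<alpha>"
      unfolding M_def using \<rho> by (intro mult_left_mono partial_coefficient_le) auto
    finally show ?thesis .
  qed
  have summable_M: "M summable_on UNIV"
    using summable_on_cmult_left[OF summable, of "inverse \<rho>"]
    unfolding M_def[abs_def] by (simp add: divide_inverse mult.assoc)
  have sum_F: "((\<lambda>\<alpha>. F \<alpha> t) has_sum g (y t)) UNIV" if "\<bar>t\<bar> < \<rho> / 4" for t
  proof -
    have "\<bar>y t $ k\<bar> < \<rho>" for k
      using y[OF that, of k] \<rho> by linarith
    then show ?thesis
      unfolding F_def by (intro sum) auto
  qed
  have "\<rho> / 4 > 0"
    using \<rho> by simp
  note termwise = termwise_has_real_derivative_has_sum[OF infinite_UNIV_multi_index this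
      deriv bound summable_M sum_F]
  from termwise(1) have "((\<lambda>\<alpha>. F' \<alpha> 0) has_sum partial j g x) UNIV"
    unfolding partial_def using DERIV_imp_deriv[OF termwise(2)] by (simp add: y_def)
  then show ?thesis
    by (simp add: F'_def y_def)
qed

lemma has_monomial_expansion_partial:
  assumes "has_monomial_expansion g a e \<rho>"
  shows "has_monomial_expansion (partial j g)
    (\<lambda>\<alpha>. a \<alpha> * real (e \<alpha> j)) (\<lambda>\<alpha>. (e \<alpha>)(j := e \<alpha> j - 1)) (\<rho> / 4)"
  unfolding has_monomial_expansion_def
proof (intro conjI allI impI)
  from assms have \<rho>: "0 < \<rho>" "\<rho> \<le> 1"
    and summable: "(\<lambda>\<alpha>. \<bar>a \<alpha>\<bar> * \<rho> ^ multideg (e \<alpha>)) summable_on UNIV"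
    unfolding has_monomial_expansion_def by blast+
  then show "0 < \<rho> / 4" "\<rho> / 4 \<le> 1"
    by simp_all
  have "\<bar>a \<alpha> * real (e \<alpha> j)\<bar> * (\<rho> / 4) ^ multideg ((e \<alpha>)(j := e \<alpha> j - 1))
      \<le> \<bar>a \<alpha>\<bar> * \<rho> ^ multideg (e \<alpha>) * inverse \<rho>" for \<alpha>
  proof -
    have "\<bar>a \<alpha> * real (e \<alpha> j)\<bar> * (\<rho> / 4) ^ multideg ((e \<alpha>)(j := e \<alpha> j - 1))
        = \<bar>a \<alpha>\<bar> * (real (e \<alpha> j) * (\<rho> / 4) ^ multideg ((e \<alpha>)(j := e \<alpha> j - 1)))"
      by (simp only: abs_mult abs_of_nat mult.assoc)
    also have "\<dots> \<le> \<bar>a \<alpha>\<bar> * (\<rho> ^ multideg (e \<alpha>) / \<rho>)"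
      using \<rho> by (intro mult_left_mono partial_coefficient_le) auto
    also have "\<dots> = \<bar>a \<alpha>\<bar> * \<rho> ^ multideg (e \<alpha>) * inverse \<rho>"
      by (simp only: divide_inverse mult.assoc)
    finally show ?thesis .
  qed
  then show "(\<lambda>\<alpha>. \<bar>a \<alpha> * real (e \<alpha> j)\<bar> * (\<rho> / 4) ^ multideg ((e \<alpha>)(j := e \<alpha> j - 1))) summable_on UNIV"
    by (intro summable_on_comparison_test[OF summable_on_cmult_left[OF summable]]) (use \<rho> in auto)
  show "((\<lambda>\<alpha>. a \<alpha> * real (e \<alpha> j) * monomial ((e \<alpha>)(j := e \<alpha> j - 1)) x) has_sum partial j g x) UNIV"
    if "\<forall>k. \<bar>x $ k\<bar> < \<rho> / 4" for x
    using has_sum_partial_termwise[OF assms that] .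
qed

text \<open>\<open>shifted_expansion c \<beta> g\<close> says that near the origin \<open>g x = \<Sum>\<^sub>\<alpha> a \<alpha> x^(\<alpha> - \<beta>)\<close>, summed over
  the support of \<open>c\<close>: the shape of \<open>\<partial>^\<beta> S\<close>.\<close>

definition shifted_expansion ::
    "(('n::finite \<Rightarrow> nat) \<Rightarrow> real) \<Rightarrow> ('n \<Rightarrow> nat) \<Rightarrow> (real^'n \<Rightarrow> real) \<Rightarrow> bool" where
  "shifted_expansion c \<beta> g \<longleftrightarrow> (\<exists>a e \<rho>. has_monomial_expansion g a e \<rho> \<and>
     (\<forall>\<alpha>. a \<alpha> \<noteq> 0 \<longrightarrow> c \<alpha> \<noteq> 0 \<and> (\<forall>k. e \<alpha> k + \<beta> k = \<alpha> k)))"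

lemma shifted_expansion_of_series:
  fixes S :: "real^'n::finite \<Rightarrow> real"
  assumes "r > 0"
    and series: "\<And>x. norm x < r \<Longrightarrow> ((\<lambda>\<alpha>. c \<alpha> * monomial \<alpha> x) has_sum S x) UNIV"
  shows "shifted_expansion c (\<lambda>_. 0) S"
proof -
  define \<rho> where "\<rho> = min 1 (r / (2 * real CARD('n)))"
  have \<rho>: "0 < \<rho>" "\<rho> \<le> 1"
    unfolding \<rho>_def using \<open>r > 0\<close> by auto
  have norm_less: "norm x < r" if "\<forall>k. \<bar>x $ k\<bar> \<le> \<rho>" for x :: "real^'n"
  proof -
    have "norm x \<le> (\<Sum>k\<in>UNIV. \<bar>x $ k\<bar>)"
      by (rule norm_le_l1_cart)
    also have "\<dots> \<le> real CARD('n) * \<rho>"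
      using sum_bounded_above[of UNIV "\<lambda>k. \<bar>x $ k\<bar>" \<rho>] that by auto
    also have "\<dots> \<le> r / 2"
      unfolding \<rho>_def by (simp add: min_def field_simps)
    finally show ?thesis
      using \<open>r > 0\<close> by simp
  qed
  have "(\<lambda>\<alpha>. c \<alpha> * \<rho> ^ multideg \<alpha>) summable_on UNIV"
    using series[OF norm_less, of "\<chi> k. \<rho>"] \<rho>
    by (auto simp: monomial_const intro: has_sum_imp_summable)
  then have "(\<lambda>\<alpha>. \<bar>c \<alpha>\<bar> * \<rho> ^ multideg (id \<alpha>)) summable_on UNIV"
    using summable_on_iff_abs_summable_on_real[of "\<lambda>\<alpha>. c \<alpha> * \<rho> ^ multideg \<alpha>"] \<rho>
    by (simp add: abs_mult)
  moreover have "((\<lambda>\<alpha>. c \<alpha> * monomial (id \<alpha>) x) has_sum S x) UNIV" if "\<forall>k. \<bar>x $ k\<bar> < \<rho>" for x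
    using that by (auto intro!: series norm_less less_imp_le)
  ultimately have "has_monomial_expansion S c id \<rho>"
    using \<rho> unfolding has_monomial_expansion_def by auto
  then show ?thesis
    unfolding shifted_expansion_def by fastforce
qed

lemma shifted_expansion_partial:
  assumes "shifted_expansion c \<beta> g"
  shows "shifted_expansion c (\<beta>(j := \<beta> j + 1)) (partial j g)"
proof -
  obtain a e \<rho> where expansion: "has_monomial_expansion g a e \<rho>"
    and supp: "\<And>\<alpha>. a \<alpha> \<noteq> 0 \<Longrightarrow> c \<alpha> \<noteq> 0 \<and> (\<forall>k. e \<alpha> k + \<beta> k = \<alpha> k)"
    using assms unfolding shifted_expansion_def by blast
  \<comment> \<open>A term with \<open>e \<alpha> j = 0\<close> gets coefficient zero, so the truncated subtraction is harmless.\<close>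
  have "c \<alpha> \<noteq> 0 \<and> (\<forall>k. ((e \<alpha>)(j := e \<alpha> j - 1)) k + (\<beta>(j := \<beta> j + 1)) k = \<alpha> k)"
    if "a \<alpha> * real (e \<alpha> j) \<noteq> 0" for \<alpha>
  proof -
    from that supp[of \<alpha>] have "c \<alpha> \<noteq> 0" "\<forall>k. e \<alpha> k + \<beta> k = \<alpha> k" "e \<alpha> j \<ge> 1"
      by auto
    moreover have "((e \<alpha>)(j := e \<alpha> j - 1)) k + (\<beta>(j := \<beta> j + 1)) k = \<alpha> k" for k
      using calculation(2)[rule_format, of k] calculation(3) by (cases "k = j") auto
    ultimately show ?thesis
      by blast
  qed
  with has_monomial_expansion_partial[OF expansion, of j] show ?thesis
    unfolding shifted_expansion_def by blast
qed

lemma shifted_expansion_partial_funpow: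
  assumes "shifted_expansion c \<beta> g"
  shows "shifted_expansion c (\<beta>(j := \<beta> j + n)) ((partial j ^^ n) g)"
proof (induction n)
  case 0
  then show ?case using assms by simp
next
  case (Suc n)
  have "(\<beta>(j := \<beta> j + n))(j := (\<beta>(j := \<beta> j + n)) j + 1) = \<beta>(j := \<beta> j + Suc n)"
    by simp
  with shifted_expansion_partial[OF Suc.IH, of j] show ?case
    by (simp only: funpow.simps o_apply)
qed

lemma shifted_expansion_foldr_partial:
  assumes "distinct js" and "shifted_expansion c (\<lambda>_. 0) g"
  shows "shifted_expansion c (\<lambda>k. if k \<in> set js then \<beta> k else 0)
    (foldr (\<lambda>j g. (partial j ^^ \<beta> j) g) js g)"
  using assms(1)
proof (induction js)
  case Nil
  then show ?case using assms(2) by simp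
next
  case (Cons j js)
  then have IH: "shifted_expansion c (\<lambda>k. if k \<in> set js then \<beta> k else 0)
      (foldr (\<lambda>j g. (partial j ^^ \<beta> j) g) js g)" and "j \<notin> set js"
    by auto
  have "(\<lambda>k. if k \<in> set js then \<beta> k else 0)(j := (if j \<in> set js then \<beta> j else 0) + \<beta> j)
      = (\<lambda>k. if k \<in> set (j # js) then \<beta> k else 0)"
    using \<open>j \<notin> set js\<close> by (auto simp: fun_eq_iff)
  moreover have "foldr (\<lambda>j g. (partial j ^^ \<beta> j) g) (j # js) g
      = (partial j ^^ \<beta> j) (foldr (\<lambda>j g. (partial j ^^ \<beta> j) g) js g)"
    by simp
  ultimately show ?case
    using shifted_expansion_partial_funpow[OF IH, of j "\<beta> j"] by simp
qed

lemma distinct_set_coord_list: "distinct (coord_list :: 'n::finite list) \<and> set (coord_list :: 'n list) = UNIV"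
proof -
  have "\<exists>js :: 'n list. distinct js \<and> set js = UNIV"
    using finite_distinct_list[of "UNIV :: 'n set"] by auto
  then show ?thesis
    unfolding coord_list_def by (rule someI_ex)
qed

lemma shifted_expansion_mixed_partial:
  fixes S :: "real^'n::finite \<Rightarrow> real"
  assumes "shifted_expansion c (\<lambda>_. 0) S"
  shows "shifted_expansion c \<beta> (mixed_partial \<beta> S)"
  using shifted_expansion_foldr_partial[OF conjunct1[OF distinct_set_coord_list] assms, of \<beta>]
  unfolding mixed_partial_def conjunct2[OF distinct_set_coord_list] by simp

section \<open>The Newton polyhedron\<close>

definition newton_sup :: "(('n::finite \<Rightarrow> nat) \<Rightarrow> real) \<Rightarrow> ('n \<Rightarrow> nat) \<Rightarrow> real^'n \<Rightarrow> real" where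
  "newton_sup c \<beta> x = (SUP v\<in>newton_polyhedron c. abs_mono x (v - (\<chi> j. real (\<beta> j))))"

lemma abs_mono_nonneg: "abs_mono x w \<ge> 0"
  unfolding abs_mono_def by (intro prod_nonneg) auto

lemma abs_mono_eq_exp:
  assumes "\<forall>k. x $ k \<noteq> 0"
  shows "abs_mono x w = exp ((\<chi> k. ln \<bar>x $ k\<bar>) \<bullet> w)"
  unfolding abs_mono_def inner_vec_def using assms by (simp add: powr_def exp_sum mult.commute)

lemma newton_polyhedron_subset_halfspace:
  fixes x :: "real^'n::finite"
  assumes "\<forall>k. x $ k \<noteq> 0 \<and> \<bar>x $ k\<bar> < 1"
  shows "newton_polyhedron c \<subseteq> {v. (\<chi> k. ln \<bar>x $ k\<bar>) \<bullet> v \<le> 0}"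
  unfolding newton_polyhedron_def
proof (rule hull_minimal)
  show "convex {v. (\<chi> k. ln \<bar>x $ k\<bar>) \<bullet> v \<le> 0}"
    by (rule convex_halfspace_le)
  have "(\<chi> k. ln \<bar>x $ k\<bar>) \<bullet> v \<le> 0" if "\<forall>j. real (\<alpha> j) \<le> v $ j" for \<alpha> and v :: "real^'n"
  proof -
    have "(\<chi> k. ln \<bar>x $ k\<bar>) \<bullet> v = (\<Sum>k\<in>UNIV. ln \<bar>x $ k\<bar> * v $ k)"
      by (simp add: inner_vec_def)
    also have "\<dots> \<le> 0"
    proof (rule sum_nonpos)
      fix k
      have "ln \<bar>x $ k\<bar> \<le> 0"
        using assms[rule_format, of k] by simp
      moreover have "0 \<le> v $ k"
        using order_trans[OF of_nat_0_le_iff that[rule_format]] .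
      ultimately show "ln \<bar>x $ k\<bar> * v $ k \<le> 0"
        by (rule mult_nonpos_nonneg)
    qed
    finally show ?thesis .
  qed
  then show "(\<Union>\<alpha>\<in>{\<alpha>. c \<alpha> \<noteq> 0}. {v. \<forall>j. real (\<alpha> j) \<le> v $ j}) \<subseteq> {v. (\<chi> k. ln \<bar>x $ k\<bar>) \<bullet> v \<le> 0}"
    by blast
qed

lemma abs_mono_le_newton_sup:
  fixes x :: "real^'n::finite"
  assumes x: "\<forall>k. x $ k \<noteq> 0 \<and> \<bar>x $ k\<bar> < 1" and "c \<mu> \<noteq> 0"
  shows "abs_mono x ((\<chi> k. real (\<mu> k)) - (\<chi> k. real (\<beta> k))) \<le> newton_sup c \<beta> x"
  unfolding newton_sup_def
proof (rule cSUP_upper)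
  show "(\<chi> k. real (\<mu> k)) \<in> newton_polyhedron c"
    unfolding newton_polyhedron_def using \<open>c \<mu> \<noteq> 0\<close> by (intro hull_inc) auto
  \<comment> \<open>\<open>abs_mono x\<close> is the exponential of a linear form that is nonpositive on the polyhedron.\<close>
  define L where "L = (\<chi> k. ln \<bar>x $ k\<bar>)"
  have "abs_mono x (v - (\<chi> k. real (\<beta> k))) \<le> exp (- (L \<bullet> (\<chi> k. real (\<beta> k))))"
    if "v \<in> newton_polyhedron c" for v
    using newton_polyhedron_subset_halfspace[OF x] that x
    by (auto simp: abs_mono_eq_exp L_def inner_diff_right)
  then show "bdd_above ((\<lambda>v. abs_mono x (v - (\<chi> k. real (\<beta> k)))) ` newton_polyhedron c)"
    by (rule bdd_aboveI2)
qed

lemma newton_sup_nonneg: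
  fixes x :: "real^'n::finite"
  assumes "\<forall>k. x $ k \<noteq> 0 \<and> \<bar>x $ k\<bar> < 1" and "c \<mu> \<noteq> 0"
  shows "0 \<le> newton_sup c \<beta> x"
  using abs_mono_le_newton_sup[where c=c and \<mu>=\<mu>, OF assms] abs_mono_nonneg by (rule order_trans[rotated])

section \<open>Dickson's lemma\<close>

lemma dickson_lemma_on:
  fixes A :: "('a \<Rightarrow> nat) set"
  assumes "finite I"
  shows "\<exists>F. finite F \<and> F \<subseteq> A \<and> (\<forall>\<gamma>\<in>A. \<exists>\<mu>\<in>F. \<forall>k\<in>I. \<mu> k \<le> \<gamma> k)"
  using assms
proof (induction I arbitrary: A rule: finite_induct)
  case empty
  show ?case
  proof (cases "A = {}")
    case False
    then obtain a where "a \<in> A"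
      by blast
    then show ?thesis
      by (intro exI[of _ "{a}"]) auto
  qed auto
next
  case (insert i I)
  obtain F0 where F0: "finite F0" "F0 \<subseteq> A" "\<forall>\<gamma>\<in>A. \<exists>\<mu>\<in>F0. \<forall>k\<in>I. \<mu> k \<le> \<gamma> k"
    using insert.IH[of A] by blast
  \<comment> \<open>Elements whose \<open>i\<close>-th entry lies below all those of \<open>F0\<close> are covered level by level.\<close>
  have "\<forall>v. \<exists>G. finite G \<and> G \<subseteq> {\<gamma>\<in>A. \<gamma> i = v} \<and>
      (\<forall>\<gamma>\<in>{\<gamma>\<in>A. \<gamma> i = v}. \<exists>\<mu>\<in>G. \<forall>k\<in>I. \<mu> k \<le> \<gamma> k)"
    using insert.IH by blast
  then obtain G where "\<forall>v. finite (G v) \<and> G v \<subseteq> {\<gamma>\<in>A. \<gamma> i = v} \<and>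
      (\<forall>\<gamma>\<in>{\<gamma>\<in>A. \<gamma> i = v}. \<exists>\<mu>\<in>G v. \<forall>k\<in>I. \<mu> k \<le> \<gamma> k)"
    by (rule exE[OF choice])
  then have G: "\<And>v. finite (G v)" "\<And>v. G v \<subseteq> {\<gamma>\<in>A. \<gamma> i = v}"
    "\<And>v. \<forall>\<gamma>\<in>{\<gamma>\<in>A. \<gamma> i = v}. \<exists>\<mu>\<in>G v. \<forall>k\<in>I. \<mu> k \<le> \<gamma> k"
    by auto
  define m where "m = Max ((\<lambda>\<mu>. \<mu> i) ` F0)"
  define F where "F = F0 \<union> (\<Union>v\<le>m. G v)"
  have "\<exists>\<mu>\<in>F. \<forall>k\<in>insert i I. \<mu> k \<le> \<gamma> k" if \<gamma>: "\<gamma> \<in> A" for \<gamma>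
  proof -
    obtain \<mu>0 where \<mu>0: "\<mu>0 \<in> F0" "\<forall>k\<in>I. \<mu>0 k \<le> \<gamma> k"
      using F0(3) \<gamma> by blast
    show ?thesis
    proof (cases "\<mu>0 i \<le> \<gamma> i")
      case True
      moreover have "\<mu>0 \<in> F"
        unfolding F_def using \<mu>0(1) by simp
      ultimately show ?thesis
        using \<mu>0(2) by auto
    next
      case False
      moreover have "\<mu>0 i \<le> m"
        unfolding m_def using \<mu>0(1) F0(1) by (intro Max_ge) auto
      ultimately have "\<gamma> i \<le> m"
        by simp
      obtain \<mu> where \<mu>: "\<mu> \<in> G (\<gamma> i)" "\<forall>k\<in>I. \<mu> k \<le> \<gamma> k"
        using G(3)[of "\<gamma> i"] \<gamma> by blast
      have "\<mu> i = \<gamma> i"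
        using G(2)[of "\<gamma> i"] \<mu>(1) by blast
      moreover have "\<mu> \<in> F"
        unfolding F_def using \<mu>(1) \<open>\<gamma> i \<le> m\<close> by blast
      ultimately show ?thesis
        using \<mu>(2) by (intro bexI[of _ \<mu>]) auto
    qed
  qed
  moreover have "finite F"
    unfolding F_def using F0(1) G(1) by auto
  moreover have "F \<subseteq> A"
    unfolding F_def using F0(2) G(2) by blast
  ultimately show ?case by blast
qed

lemma dickson_lemma:
  fixes A :: "('n::finite \<Rightarrow> nat) set"
  obtains F where "finite F" "F \<subseteq> A" "\<And>\<gamma>. \<gamma> \<in> A \<Longrightarrow> \<exists>\<mu>\<in>F. \<mu> \<le> \<gamma>"
  using dickson_lemma_on[of "UNIV :: 'n set" A] by (auto simp: le_fun_def)

section \<open>The estimate\<close>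

lemma abs_monomial_le_abs_mono:
  assumes x: "\<forall>k. x $ k \<noteq> 0 \<and> \<bar>x $ k\<bar> \<le> \<rho>" and \<rho>: "0 < \<rho>" "\<rho> \<le> 1"
    and q: "\<forall>k. q k + \<beta> k = \<alpha> k" and "\<mu> \<le> \<alpha>"
  shows "\<bar>monomial q x\<bar>
    \<le> abs_mono x ((\<chi> k. real (\<mu> k)) - (\<chi> k. real (\<beta> k))) * (\<rho> ^ multideg q / \<rho> ^ multideg \<mu>)"
proof -
  have factor: "\<bar>x $ k\<bar> ^ q k \<le> \<bar>x $ k\<bar> powr (real (\<mu> k) - real (\<beta> k)) * (\<rho> ^ q k / \<rho> ^ \<mu> k)" for k
  proof -
    have x_pos: "\<bar>x $ k\<bar> > 0" and "\<mu> k \<le> \<alpha> k"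
      using x \<open>\<mu> \<le> \<alpha>\<close> by (auto simp: le_fun_def)
    have "\<bar>x $ k\<bar> ^ q k = \<bar>x $ k\<bar> powr (real (q k))"
      using x_pos by (simp add: powr_realpow)
    also have "real (q k) = (real (\<mu> k) - real (\<beta> k)) + real (\<alpha> k - \<mu> k)"
      using q[rule_format, of k] \<open>\<mu> k \<le> \<alpha> k\<close> by (simp add: of_nat_diff)
    also have "\<bar>x $ k\<bar> powr \<dots> = \<bar>x $ k\<bar> powr (real (\<mu> k) - real (\<beta> k)) * \<bar>x $ k\<bar> ^ (\<alpha> k - \<mu> k)"
      using x_pos by (simp add: powr_add powr_realpow)
    also have "\<bar>x $ k\<bar> ^ (\<alpha> k - \<mu> k) \<le> \<rho> ^ (\<alpha> k - \<mu> k)"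
      using x by (intro power_mono) auto
    also have "\<rho> ^ (\<alpha> k - \<mu> k) = \<rho> ^ \<alpha> k / \<rho> ^ \<mu> k"
      using \<rho> \<open>\<mu> k \<le> \<alpha> k\<close> by (simp add: power_diff)
    also have "\<dots> \<le> \<rho> ^ q k / \<rho> ^ \<mu> k"
      using \<rho> q[rule_format, of k] by (intro divide_right_mono power_decreasing) auto
    finally show ?thesis
      by (simp add: mult_left_mono)
  qed
  have "\<bar>monomial q x\<bar> = (\<Prod>k\<in>UNIV. \<bar>x $ k\<bar> ^ q k)"
    unfolding monomial_def by (simp add: abs_prod power_abs)
  also have "\<dots> \<le> (\<Prod>k\<in>UNIV. \<bar>x $ k\<bar> powr (real (\<mu> k) - real (\<beta> k)) * (\<rho> ^ q k / \<rho> ^ \<mu> k))"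
    by (rule prod_mono) (use factor in auto)
  also have "\<dots> = abs_mono x ((\<chi> k. real (\<mu> k)) - (\<chi> k. real (\<beta> k))) * (\<rho> ^ multideg q / \<rho> ^ multideg \<mu>)"
    unfolding abs_mono_def multideg_def by (simp add: prod.distrib prod_dividef power_sum)
  finally show ?thesis .
qed

text \<open>Since the dominated indices \<open>\<mu>\<close> come from a finite set, the factor \<open>\<rho> ^ multideg \<mu>\<close> lost
  in the previous lemma is bounded below by a fixed power \<open>\<rho> ^ N\<close>.\<close>

lemma abs_monomial_le_newton_sup:
  fixes c :: "('n::finite \<Rightarrow> nat) \<Rightarrow> real"
  assumes \<rho>: "0 < \<rho>" "\<rho> \<le> 1"
  obtains N where "\<And>(x :: real^'n) \<alpha> q. \<forall>k. x $ k \<noteq> 0 \<and> \<bar>x $ k\<bar> < \<rho> \<Longrightarrow> c \<alpha> \<noteq> 0 \<Longrightarrow>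
    \<forall>k. q k + \<beta> k = \<alpha> k \<Longrightarrow> \<bar>monomial q x\<bar> \<le> \<rho> ^ multideg q / \<rho> ^ N * newton_sup c \<beta> x"
proof -
  obtain F where F: "finite F" "F \<subseteq> {\<alpha>. c \<alpha> \<noteq> 0}" "\<And>\<alpha>. c \<alpha> \<noteq> 0 \<Longrightarrow> \<exists>\<mu>\<in>F. \<mu> \<le> \<alpha>"
    using dickson_lemma[of "{\<alpha>. c \<alpha> \<noteq> 0}"] by auto
  define N where "N = (\<Sum>\<mu>\<in>F. multideg \<mu>)"
  show ?thesis
  proof (rule that)
    fix x :: "real^'n" and \<alpha> q
    assume x: "\<forall>k. x $ k \<noteq> 0 \<and> \<bar>x $ k\<bar> < \<rho>" and "c \<alpha> \<noteq> 0" and q: "\<forall>k. q k + \<beta> k = \<alpha> k"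
    obtain \<mu> where \<mu>: "\<mu> \<in> F" "\<mu> \<le> \<alpha>"
      using F(3)[OF \<open>c \<alpha> \<noteq> 0\<close>] by blast
    have x1: "\<forall>k. x $ k \<noteq> 0 \<and> \<bar>x $ k\<bar> < 1"
      using x \<rho>(2) less_le_trans by blast
    have "\<rho> ^ N \<le> \<rho> ^ multideg \<mu>"
      unfolding N_def using \<rho> \<mu>(1) F(1) by (intro power_decreasing member_le_sum) auto
    then have ratio: "\<rho> ^ multideg q / \<rho> ^ multideg \<mu> \<le> \<rho> ^ multideg q / \<rho> ^ N"
      using \<rho> by (intro divide_left_mono) auto
    have "\<bar>monomial q x\<bar>
        \<le> abs_mono x ((\<chi> k. real (\<mu> k)) - (\<chi> k. real (\<beta> k))) * (\<rho> ^ multideg q / \<rho> ^ multideg \<mu>)"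
      using x \<rho> q \<mu>(2) by (intro abs_monomial_le_abs_mono) (auto simp: less_imp_le)
    also have "\<dots> \<le> newton_sup c \<beta> x * (\<rho> ^ multideg q / \<rho> ^ N)"
    proof (rule mult_mono[OF _ ratio])
      show "abs_mono x ((\<chi> k. real (\<mu> k)) - (\<chi> k. real (\<beta> k))) \<le> newton_sup c \<beta> x"
        using F(2) \<mu>(1) by (intro abs_mono_le_newton_sup x1) auto
      show "0 \<le> newton_sup c \<beta> x"
        using F(2) \<mu>(1) by (intro newton_sup_nonneg[where \<mu>=\<mu>] x1) auto
    qed (use \<rho> in auto)
    finally show "\<bar>monomial q x\<bar> \<le> \<rho> ^ multideg q / \<rho> ^ N * newton_sup c \<beta> x"
      by (simp only: mult.commute)
  qed
qed

lemma eventually_abs_component_less: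
  assumes "\<rho> > 0"
  shows "\<forall>\<^sub>F x in nhds (0 :: real^'n::finite). \<forall>k. \<bar>x $ k\<bar> < \<rho>"
  unfolding eventually_nhds_metric
  using assms component_le_norm_cart le_less_trans by (metis dist_0_norm dist_commute)

lemma shifted_expansion_bound:
  assumes "shifted_expansion c \<beta> g"
  shows "\<exists>C. \<forall>\<^sub>F x in nhds 0. (\<forall>j. x $ j \<noteq> 0) \<longrightarrow> \<bar>g x\<bar> \<le> C * newton_sup c \<beta> x"
proof -
  obtain a e \<rho> where expansion: "has_monomial_expansion g a e \<rho>"
    and supp: "\<And>\<alpha>. a \<alpha> \<noteq> 0 \<Longrightarrow> c \<alpha> \<noteq> 0 \<and> (\<forall>k. e \<alpha> k + \<beta> k = \<alpha> k)"
    using assms unfolding shifted_expansion_def by blast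
  then have \<rho>: "0 < \<rho>" "\<rho> \<le> 1"
    and summable: "(\<lambda>\<alpha>. \<bar>a \<alpha>\<bar> * \<rho> ^ multideg (e \<alpha>)) summable_on UNIV"
    and sum: "\<And>x. \<forall>k. \<bar>x $ k\<bar> < \<rho> \<Longrightarrow> ((\<lambda>\<alpha>. a \<alpha> * monomial (e \<alpha>) x) has_sum g x) UNIV"
    unfolding has_monomial_expansion_def by auto
  obtain N where N: "\<And>x \<alpha> q. \<forall>k. x $ k \<noteq> 0 \<and> \<bar>x $ k\<bar> < \<rho> \<Longrightarrow> c \<alpha> \<noteq> 0 \<Longrightarrow>
      \<forall>k. q k + \<beta> k = \<alpha> k \<Longrightarrow> \<bar>monomial q x\<bar> \<le> \<rho> ^ multideg q / \<rho> ^ N * newton_sup c \<beta> x"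
    using abs_monomial_le_newton_sup[OF \<rho>, where c=c and \<beta>=\<beta>] by blast
  define A where "A = (\<Sum>\<^sub>\<infinity>\<alpha>. \<bar>a \<alpha>\<bar> * \<rho> ^ multideg (e \<alpha>))"
  have bound: "\<bar>g x\<bar> \<le> A / \<rho> ^ N * newton_sup c \<beta> x"
    if x: "\<forall>k. x $ k \<noteq> 0 \<and> \<bar>x $ k\<bar> < \<rho>" for x
  proof -
    have "norm (a \<alpha> * monomial (e \<alpha>) x) \<le> \<bar>a \<alpha>\<bar> * \<rho> ^ multideg (e \<alpha>) * (newton_sup c \<beta> x / \<rho> ^ N)"
      for \<alpha>
    proof (cases "a \<alpha> = 0")
      case False
      with supp N[OF x, of \<alpha> "e \<alpha>"]
      have "\<bar>monomial (e \<alpha>) x\<bar> \<le> \<rho> ^ multideg (e \<alpha>) * (newton_sup c \<beta> x / \<rho> ^ N)"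
        by simp
      from mult_left_mono[OF this abs_ge_zero[of "a \<alpha>"]] show ?thesis
        by (simp add: abs_mult mult.assoc)
    qed simp
    then have "norm (g x) \<le> A * (newton_sup c \<beta> x / \<rho> ^ N)"
      unfolding A_def using x
      by (intro norm_infsum_le[OF sum has_sum_cmult_left[OF has_sum_infsum[OF summable]]]) auto
    then show ?thesis
      by simp
  qed
  have "\<forall>\<^sub>F x in nhds 0. (\<forall>j. x $ j \<noteq> 0) \<longrightarrow> \<bar>g x\<bar> \<le> A / \<rho> ^ N * newton_sup c \<beta> x"
    using eventually_abs_component_less[OF \<rho>(1)] by (rule eventually_mono) (use bound in blast)
  then show ?thesis ..
qed

lemma shifted_expansion_bound_mono:
  assumes "shifted_expansion c \<beta> g" and "c \<mu> \<noteq> 0"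
  shows "\<exists>C. \<forall>C'\<ge>C. \<forall>\<^sub>F x in nhds 0. (\<forall>j. x $ j \<noteq> 0) \<longrightarrow> \<bar>g x\<bar> \<le> C' * newton_sup c \<beta> x"
proof -
  obtain C where bound: "\<forall>\<^sub>F x in nhds 0. (\<forall>j. x $ j \<noteq> 0) \<longrightarrow> \<bar>g x\<bar> \<le> C * newton_sup c \<beta> x"
    using shifted_expansion_bound[OF assms(1)] by blast
  have "\<forall>\<^sub>F x in nhds 0. (\<forall>j. x $ j \<noteq> 0) \<longrightarrow> \<bar>g x\<bar> \<le> C' * newton_sup c \<beta> x" if "C \<le> C'" for C'
    using bound eventually_abs_component_less[OF zero_less_one]
  proof eventually_elim
    case (elim x)
    show ?case
    proof
      assume x: "\<forall>j. x $ j \<noteq> 0"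
      then have "\<bar>g x\<bar> \<le> C * newton_sup c \<beta> x"
        using elim(1) by blast
      \<comment> \<open>Enlarging the constant is harmless because the supremum is nonnegative.\<close>
      also have "\<dots> \<le> C' * newton_sup c \<beta> x"
        using x elim(2) \<open>c \<mu> \<noteq> 0\<close> \<open>C \<le> C'\<close>
        by (intro mult_right_mono newton_sup_nonneg[where \<mu>=\<mu>]) auto
      finally show "\<bar>g x\<bar> \<le> C' * newton_sup c \<beta> x" .
    qed
  qed
  then show ?thesis
    by blast
qed

lemma shifted_expansion_vanishing:
  assumes "shifted_expansion (\<lambda>_. 0) \<beta> g"
  shows "\<forall>\<^sub>F x in nhds 0. g x = 0"
proof -
  obtain a e \<rho> where expansion: "has_monomial_expansion g a e \<rho>" and "\<And>\<alpha>. a \<alpha> = 0"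
    using assms unfolding shifted_expansion_def by auto
  then have vanishing: "g x = 0" if "\<forall>k. \<bar>x $ k\<bar> < \<rho>" for x
    using that has_sum_unique[OF _ has_sum_0] unfolding has_monomial_expansion_def by fastforce
  have \<rho>: "0 < \<rho>"
    using expansion unfolding has_monomial_expansion_def by simp
  show ?thesis
    using eventually_abs_component_less[OF \<rho>] by (rule eventually_mono) (rule vanishing)
qed

lemma eventually_bound_shifted_expansions:
  fixes g :: "('n::finite \<Rightarrow> nat) \<Rightarrow> real^'n \<Rightarrow> real"
  assumes "finite B" and expansion: "\<And>\<beta>. \<beta> \<in> B \<Longrightarrow> shifted_expansion c \<beta> (g \<beta>)"
  shows "\<exists>C. \<forall>\<^sub>F x in nhds 0. (\<forall>j. x $ j \<noteq> 0) \<longrightarrow> (\<forall>\<beta>\<in>B. \<bar>g \<beta> x\<bar> \<le> C * newton_sup c \<beta> x)"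
proof (cases "c = (\<lambda>_. 0)")
  case True
  \<comment> \<open>The Newton polyhedron is empty and \<open>newton_sup\<close> is the unspecified \<open>Sup {}\<close>,
    so the functions themselves have to vanish.\<close>
  have "\<forall>\<beta>\<in>B. \<forall>\<^sub>F x in nhds 0. g \<beta> x = 0"
  proof
    fix \<beta> assume "\<beta> \<in> B"
    show "\<forall>\<^sub>F x in nhds 0. g \<beta> x = 0"
      using expansion[OF \<open>\<beta> \<in> B\<close>] unfolding True by (rule shifted_expansion_vanishing)
  qed
  then have "\<forall>\<^sub>F x in nhds 0. \<forall>\<beta>\<in>B. g \<beta> x = 0"
    by (rule eventually_ball_finite[OF \<open>finite B\<close>])
  then have "\<forall>\<^sub>F x in nhds 0. (\<forall>j. x $ j \<noteq> 0) \<longrightarrow> (\<forall>\<beta>\<in>B. \<bar>g \<beta> x\<bar> \<le> 0 * newton_sup c \<beta> x)"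
    by (rule eventually_mono) simp
  then show ?thesis ..
next
  case False
  then obtain \<mu> where "c \<mu> \<noteq> 0"
    by auto
  have "\<forall>\<beta>\<in>B. \<exists>C. \<forall>C'\<ge>C.
      \<forall>\<^sub>F x in nhds 0. (\<forall>j. x $ j \<noteq> 0) \<longrightarrow> \<bar>g \<beta> x\<bar> \<le> C' * newton_sup c \<beta> x"
    using shifted_expansion_bound_mono[OF expansion \<open>c \<mu> \<noteq> 0\<close>] by blast
  then obtain C where C: "\<forall>\<beta>\<in>B. \<forall>C'\<ge>C \<beta>.
      \<forall>\<^sub>F x in nhds 0. (\<forall>j. x $ j \<noteq> 0) \<longrightarrow> \<bar>g \<beta> x\<bar> \<le> C' * newton_sup c \<beta> x"
    by (rule exE[OF bchoice])
  have "\<forall>\<beta>\<in>B. \<forall>\<^sub>F x in nhds 0.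
      (\<forall>j. x $ j \<noteq> 0) \<longrightarrow> \<bar>g \<beta> x\<bar> \<le> (\<Sum>\<beta>'\<in>B. \<bar>C \<beta>'\<bar>) * newton_sup c \<beta> x"
  proof
    fix \<beta> assume "\<beta> \<in> B"
    have "C \<beta> \<le> \<bar>C \<beta>\<bar>"
      by simp
    also have "\<dots> \<le> (\<Sum>\<beta>'\<in>B. \<bar>C \<beta>'\<bar>)"
      using \<open>\<beta> \<in> B\<close> \<open>finite B\<close> by (intro member_le_sum) auto
    finally have C_le: "C \<beta> \<le> (\<Sum>\<beta>'\<in>B. \<bar>C \<beta>'\<bar>)" .
    show "\<forall>\<^sub>F x in nhds 0.
        (\<forall>j. x $ j \<noteq> 0) \<longrightarrow> \<bar>g \<beta> x\<bar> \<le> (\<Sum>\<beta>'\<in>B. \<bar>C \<beta>'\<bar>) * newton_sup c \<beta> x"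
      using C[rule_format, OF \<open>\<beta> \<in> B\<close> C_le] .
  qed
  then have "\<forall>\<^sub>F x in nhds 0. \<forall>\<beta>\<in>B.
      (\<forall>j. x $ j \<noteq> 0) \<longrightarrow> \<bar>g \<beta> x\<bar> \<le> (\<Sum>\<beta>'\<in>B. \<bar>C \<beta>'\<bar>) * newton_sup c \<beta> x"
    by (rule eventually_ball_finite[OF \<open>finite B\<close>])
  then have "\<forall>\<^sub>F x in nhds 0. (\<forall>j. x $ j \<noteq> 0) \<longrightarrow>
      (\<forall>\<beta>\<in>B. \<bar>g \<beta> x\<bar> \<le> (\<Sum>\<beta>'\<in>B. \<bar>C \<beta>'\<bar>) * newton_sup c \<beta> x)"
    by (rule eventually_mono) blast
  then show ?thesis ..
qed

theorem corollary2p3: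
  fixes S :: "real^'n::finite \<Rightarrow> real"
    and c :: "('n \<Rightarrow> nat) \<Rightarrow> real"
    and r :: real
    and \<beta>s :: "('n \<Rightarrow> nat) list"
  assumes r_pos: "r > 0"
    and series: "\<And>x. norm x < r \<Longrightarrow> ((\<lambda>\<alpha>. c \<alpha> * monomial \<alpha> x) has_sum S x) UNIV"
  shows "\<exists>C. \<exists>\<delta>>0. \<forall>x. norm x < \<delta> \<and> (\<forall>j. x $ j \<noteq> 0) \<longrightarrow>
           (\<forall>\<beta>\<in>set \<beta>s. \<bar>mixed_partial \<beta> S x\<bar>
              \<le> C * (SUP \<alpha>\<in>newton_polyhedron c. abs_mono x (\<alpha> - (\<chi> j. real (\<beta> j)))))"
proof -
  have expansion: "shifted_expansion c \<beta> (mixed_partial \<beta> S)" for \<beta>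
    using shifted_expansion_mixed_partial[OF shifted_expansion_of_series[OF r_pos series]] .
  have "\<exists>C. \<forall>\<^sub>F x in nhds 0. (\<forall>j. x $ j \<noteq> 0) \<longrightarrow>
      (\<forall>\<beta>\<in>set \<beta>s. \<bar>mixed_partial \<beta> S x\<bar> \<le> C * newton_sup c \<beta> x)"
    by (rule eventually_bound_shifted_expansions) (simp_all add: expansion)
  then obtain C \<delta> where "\<delta> > 0" and bound: "\<And>x. dist x 0 < \<delta> \<Longrightarrow> (\<forall>j. x $ j \<noteq> 0) \<longrightarrow>
      (\<forall>\<beta>\<in>set \<beta>s. \<bar>mixed_partial \<beta> S x\<bar> \<le> C * newton_sup c \<beta> x)"
    unfolding eventually_nhds_metric by blast
  have "norm x < \<delta> \<and> (\<forall>j. x $ j \<noteq> 0) \<longrightarrow> (\<forall>\<beta>\<in>set \<beta>s. \<bar>mixed_partial \<beta> S x\<bar>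
      \<le> C * (SUP \<alpha>\<in>newton_polyhedron c. abs_mono x (\<alpha> - (\<chi> j. real (\<beta> j)))))" for x
    using bound[of x] unfolding newton_sup_def by (simp add: dist_norm)
  with \<open>\<delta> > 0\<close> show ?thesis
    by blast
qed

end
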